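(* For every $\varepsilon_0\in[0,1/4)$ and integer $w\ge1$, any $\varepsilon_0$-error online algorithm computing the width-$w$ $\mathrm{Tribes}$ function on the $\mathrm{Tribes}$ instance must reveal $\Omega(2^w)$ tribes in expectation (the implied constant may depend on $\varepsilon_0$ but not on $w$).
   Context: The $\mathrm{Tribes}$ instance of width $w$: variables $(x_{i,j})_{i\in[2^w],j\in[w]}$, $f(x)=\bigvee_{i=1}^{2^w}\bigwedge_{j=1}^w x_{i,j}$, input $x$ uniform, and for each $i$ the costs $(c_{i,1},\dots,c_{i,w})$ are an independent uniformly random permutation of $[w]$. Online priced query model: the algorithm maintains investments $\theta$ (initially $0$), increasing one coordinate by a positive amount per step; $x_{i,j}$ is revealed once $\theta_{i,j}\ge c_{i,j}$. An algorithm reveals the $i$-th tribe if at least one of $x_{i,1},\dots,x_{i,w}$ is revealed to it. It is $\varepsilon_0$-error if it outputs $f(x)$ except with probability at most $\varepsilon_0$ over the input, costs and its randomness. *)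

theory Defs
  imports "HOL-Probability.Probability"
begin

definition tvars :: "nat \<Rightarrow> (nat \<times> nat) set" where
  "tvars w = {..<2^w} \<times> {..<w}"

definition tribes :: "nat \<Rightarrow> (nat \<times> nat \<Rightarrow> bool) \<Rightarrow> bool" where
  "tribes w x = (\<exists>i<2^w. \<forall>j<w. x (i, j))"

definition inputs :: "nat \<Rightarrow> (nat \<times> nat \<Rightarrow> bool) set" where
  "inputs w = {x. \<forall>v. v \<notin> tvars w \<longrightarrow> x v = False}"

(* Cost space (uniform distribution): for every tribe i, (c(i,1..w)) is a permutation of [w] = {1..w};
   the uniform distribution on this product set is exactly independent uniform permutations. *)
definition costs :: "nat \<Rightarrow> (nat \<times> nat \<Rightarrow> nat) set" where
  "costs w = {c. (\<forall>i<2^w. bij_betw (\<lambda>j. c (i, j)) {..<w} {1..w}) \<and>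
                 (\<forall>v. v \<notin> tvars w \<longrightarrow> c v = 0)}"

(* What the algorithm sees: the values of the revealed variables. *)
type_synonym observation = "nat \<times> nat \<Rightarrow> bool option"

datatype action = Invest "nat \<times> nat" real | Output bool

(* A deterministic online strategy: maps the history of observations (one per step so far,
   starting with the initial observation) to the next action. *)
type_synonym strategy = "observation list \<Rightarrow> action"

definition wf_strategy :: "strategy \<Rightarrow> bool" where
  "wf_strategy s = (\<forall>h v d. s h = Invest v d \<longrightarrow> d > 0)"

definition observe ::
  "nat \<Rightarrow> (nat \<times> nat \<Rightarrow> bool) \<Rightarrow> (nat \<times> nat \<Rightarrow> nat) \<Rightarrow> (nat \<times> nat \<Rightarrow> real) \<Rightarrow> observation" where
  "observe w x c \<theta> v = (if v \<in> tvars w \<and> real (c v) \<le> \<theta> v then Some (x v) else None)"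

(* State after n steps: investments, observation history, output (if already produced). *)
fun run :: "nat \<Rightarrow> strategy \<Rightarrow> (nat \<times> nat \<Rightarrow> bool) \<Rightarrow> (nat \<times> nat \<Rightarrow> nat) \<Rightarrow> nat \<Rightarrow>
    (nat \<times> nat \<Rightarrow> real) \<times> observation list \<times> bool option" where
  "run w s x c 0 = ((\<lambda>_. 0), [observe w x c (\<lambda>_. 0)], None)"
| "run w s x c (Suc n) =
     (case run w s x c n of (\<theta>, h, out) \<Rightarrow>
        if out \<noteq> None then (\<theta>, h, out)
        else (case s h of
                Output b \<Rightarrow> (\<theta>, h, Some b)
              | Invest v d \<Rightarrow>
                  (let \<theta>' = \<theta>(v := \<theta> v + d) in (\<theta>', h @ [observe w x c \<theta>'], None))))"

definition revealed :: "nat \<Rightarrow> strategy \<Rightarrow> (nat \<times> nat \<Rightarrow> bool) \<Rightarrow> (nat \<times> nat \<Rightarrow> nat) \<Rightarrow> nat \<times> nat \<Rightarrow> bool" where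
  "revealed w s x c v = (v \<in> tvars w \<and> (\<exists>n. real (c v) \<le> fst (run w s x c n) v))"

definition tribes_revealed :: "nat \<Rightarrow> strategy \<Rightarrow> (nat \<times> nat \<Rightarrow> bool) \<Rightarrow> (nat \<times> nat \<Rightarrow> nat) \<Rightarrow> nat" where
  "tribes_revealed w s x c = card {i. i < 2^w \<and> (\<exists>j<w. revealed w s x c (i, j))}"

(* The strategy outputs f(x) (never outputting counts as an error). *)
definition correct :: "nat \<Rightarrow> strategy \<Rightarrow> (nat \<times> nat \<Rightarrow> bool) \<Rightarrow> (nat \<times> nat \<Rightarrow> nat) \<Rightarrow> bool" where
  "correct w s x c = (\<exists>n. snd (snd (run w s x c n)) = Some (tribes w x))"

definition det_error :: "nat \<Rightarrow> strategy \<Rightarrow> real" where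
  "det_error w s = real (card {(x, c). x \<in> inputs w \<and> c \<in> costs w \<and> \<not> correct w s x c})
                   / real (card (inputs w \<times> costs w))"

definition det_revealed :: "nat \<Rightarrow> strategy \<Rightarrow> real" where
  "det_revealed w s = (\<Sum>(x, c) \<in> inputs w \<times> costs w. real (tribes_revealed w s x c))
                      / real (card (inputs w \<times> costs w))"

(* A randomized online algorithm is a probability distribution R over (well-formed) deterministic
   strategies; its error and expected number of revealed tribes are the averages over R. *)
definition randomized_alg :: "nat \<Rightarrow> strategy measure \<Rightarrow> bool" where
  "randomized_alg w R = (prob_space R \<and> (\<forall>s\<in>space R. wf_strategy s) \<and>
      det_error w \<in> borel_measurable R \<and> det_revealed w \<in> borel_measurable R)"

end

theory Submission
  imports Defs
begin

(* The bound is proved for every deterministic strategy and then averaged over the randomness.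
   Suppose a deterministic strategy answers a zero x of Tribes correctly under costs c while
   tribe i stays unrevealed. Filling tribe i with ones does not change the run, since the
   strategy never sees the changed bits, but makes the input a one of Tribes: the strategy now
   errs. The filled input has i as its only full tribe, so x and i can be recovered from it
   together with the old contents of tribe i; hence every error on a one of Tribes is charged
   at most 2^w times, and
     2^w * #(zeros x costs) <= 2^w * #errors + sum over all (x, c) of the revealed tribes.
   A uniform input is a zero with probability (1 - 2^-w)^(2^w) >= 1/4, which turns this into
   1/4 <= error + (expected number of revealed tribes) / 2^w. *)

lemma run_output_stable:
  assumes "snd (snd (run w s x c n)) = Some b"
  shows "snd (snd (run w s x c (n + k))) = Some b"
  using assms by (induction k) (auto split: prod.splits)

lemma run_output_unique:
  assumes "snd (snd (run w s x c n)) = Some b" and "snd (snd (run w s x c m)) = Some b'"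
  shows "b = b'"
  using run_output_stable[OF assms(1), of m] run_output_stable[OF assms(2), of n]
  by (simp add: add.commute)

lemma run_cong_revealed:
  assumes "\<And>v. revealed w s x c v \<Longrightarrow> x v = y v"
  shows "run w s x c n = run w s y c n"
proof -
  have same_view: "observe w x c (fst (run w s x c k)) = observe w y c (fst (run w s x c k))" for k
    using assms by (auto simp: observe_def revealed_def fun_eq_iff)
  show ?thesis
  proof (induction n)
    case 0
    then show ?case using same_view[of 0] by simp
  next
    case (Suc n)
    obtain \<theta> h out where xn: "run w s x c n = (\<theta>, h, out)" by (cases "run w s x c n") auto
    then have yn: "run w s y c n = (\<theta>, h, out)" using Suc by simp
    show ?case
      using xn yn same_view[of "Suc n"] by (auto simp: Let_def split: action.split)
  qed
qed

definition tribe_rows :: "nat \<Rightarrow> (nat \<times> nat \<Rightarrow> bool) \<Rightarrow> nat \<Rightarrow> nat set" where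
  "tribe_rows w x = (\<lambda>i\<in>{..<2^w}. {j. j < w \<and> x (i, j)})"

lemma bij_betw_tribe_rows:
  assumes "T \<subseteq> Pow {..<w}"
  shows "bij_betw (tribe_rows w) {x \<in> inputs w. \<forall>i<2^w. tribe_rows w x i \<in> T} (\<Pi>\<^sub>E i\<in>{..<2^w}. T)"
proof (rule bij_betw_byWitness[where f' = "\<lambda>F v. fst v < 2^w \<and> snd v < w \<and> snd v \<in> F (fst v)"])
  show "\<forall>x\<in>{x \<in> inputs w. \<forall>i<2^w. tribe_rows w x i \<in> T}.
          (\<lambda>v. fst v < 2^w \<and> snd v < w \<and> snd v \<in> tribe_rows w x (fst v)) = x"
    by (auto simp: fun_eq_iff tribe_rows_def inputs_def tvars_def)
  show "\<forall>F\<in>\<Pi>\<^sub>E i\<in>{..<2^w}. T.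
          tribe_rows w (\<lambda>v. fst v < 2^w \<and> snd v < w \<and> snd v \<in> F (fst v)) = F"
    using assms by (force simp: fun_eq_iff tribe_rows_def PiE_def extensional_def)
  show "tribe_rows w ` {x \<in> inputs w. \<forall>i<2^w. tribe_rows w x i \<in> T} \<subseteq> (\<Pi>\<^sub>E i\<in>{..<2^w}. T)"
    by (auto simp: tribe_rows_def)
  show "(\<lambda>F v. fst v < 2^w \<and> snd v < w \<and> snd v \<in> F (fst v)) ` (\<Pi>\<^sub>E i\<in>{..<2^w}. T)
          \<subseteq> {x \<in> inputs w. \<forall>i<2^w. tribe_rows w x i \<in> T}"
    using assms by (auto simp: inputs_def tvars_def tribe_rows_def PiE_def Pi_def subset_eq
        intro: back_subst[of "\<lambda>A. A \<in> T"])
qed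

lemma inputs_eq_rows_in_Pow: "inputs w = {x \<in> inputs w. \<forall>i<2^w. tribe_rows w x i \<in> Pow {..<w}}"
  by (auto simp: tribe_rows_def)

lemma finite_inputs: "finite (inputs w)"
  using bij_betw_finite[OF bij_betw_tribe_rows[of "Pow {..<w}" w]] inputs_eq_rows_in_Pow
  by (simp add: finite_PiE)

lemma card_inputs: "card (inputs w) = (2^w)^(2^w)"
  using bij_betw_same_card[OF bij_betw_tribe_rows[of "Pow {..<w}" w]] inputs_eq_rows_in_Pow
  by (simp add: card_PiE card_Pow)

lemma card_zeros_tribes: "card {x \<in> inputs w. \<not> tribes w x} = (2^w - 1)^(2^w)"
proof -
  have "{x \<in> inputs w. \<not> tribes w x} =
        {x \<in> inputs w. \<forall>i<2^w. tribe_rows w x i \<in> Pow {..<w} - {{..<w}}}"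
    by (auto simp: tribes_def tribe_rows_def)
  then show ?thesis
    using bij_betw_same_card[OF bij_betw_tribe_rows[of "Pow {..<w} - {{..<w}}" w]]
    by (simp add: card_PiE card_Pow card_Diff_singleton)
qed

lemma even_self_power_le_four_pred_power:
  assumes "k \<ge> 1"
  shows "(2*k)^(2*k) \<le> 4 * (2*k - 1)^(2*k)"
proof -
  have k: "real k > 0" using assms by simp
  have "1/2 = 1 + real k * (- 1 / (2 * real k))" using k by simp
  also have "\<dots> \<le> (1 - 1 / (2 * real k))^k"
    using Bernoulli_inequality[of "- 1 / (2 * real k)" k] assms by simp
  also have "\<dots> = ((2 * real k - 1) / (2 * real k))^k" using k by (simp add: field_simps)
  finally have "(2 * real k)^k \<le> 2 * (2 * real k - 1)^k" using k by (simp add: power_divide field_simps)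
  then have "((2 * real k)^k)^2 \<le> (2 * (2 * real k - 1)^k)^2" by (rule power_mono) simp
  then have "real ((2*k)^(2*k)) \<le> real (4 * (2*k - 1)^(2*k))"
    using assms by (simp add: of_nat_diff power_mult_distrib power_mult[symmetric] mult.commute)
  then show ?thesis by linarith
qed

lemma card_inputs_le_four_card_zeros:
  assumes "w \<ge> 1"
  shows "card (inputs w) \<le> 4 * card {x \<in> inputs w. \<not> tribes w x}"
proof -
  have "(2::nat)^w = 2 * 2^(w - 1)" using assms by (simp add: power_eq_if)
  then show ?thesis
    unfolding card_inputs card_zeros_tribes
    using even_self_power_le_four_pred_power[of "2^(w - 1)"] by simp
qed

lemma costs_range: "c \<in> costs w \<Longrightarrow> (i, j) \<in> tvars w \<Longrightarrow> c (i, j) \<in> {1..w}"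
  using bij_betw_apply[of "\<lambda>j. c (i, j)" "{..<w}" "{1..w}" j] by (auto simp: costs_def tvars_def)

lemma finite_costs: "finite (costs w)"
proof (rule finite_subset)
  show "costs w \<subseteq> {c. \<forall>v. (v \<in> tvars w \<longrightarrow> c v \<in> {1..w}) \<and> (v \<notin> tvars w \<longrightarrow> c v = 0)}"
    using costs_range by (fastforce simp: costs_def)
  show "finite {c. \<forall>v. (v \<in> tvars w \<longrightarrow> c v \<in> {1..w}) \<and> (v \<notin> tvars w \<longrightarrow> c v = (0::nat))}"
    by (rule finite_set_of_finite_funs) (auto simp: tvars_def)
qed

lemma costs_nonempty: "costs w \<noteq> {}"
proof -
  have "bij_betw (\<lambda>j. if (i, j) \<in> tvars w then Suc j else 0) {..<w} {1..w}" if "i < 2^w" for i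
    using that bij_betw_cong[of "{..<w}" "\<lambda>j. if (i, j) \<in> tvars w then Suc j else 0" Suc]
    by (simp add: tvars_def image_Suc_lessThan)
  then have "(\<lambda>(i, j). if (i, j) \<in> tvars w then Suc j else 0) \<in> costs w"
    by (auto simp: costs_def)
  then show ?thesis by blast
qed

definition revealed_tribes ::
    "nat \<Rightarrow> strategy \<Rightarrow> (nat \<times> nat \<Rightarrow> bool) \<Rightarrow> (nat \<times> nat \<Rightarrow> nat) \<Rightarrow> nat set" where
  "revealed_tribes w s x c = {i. i < 2^w \<and> (\<exists>j<w. revealed w s x c (i, j))}"

definition fill_tribe :: "nat \<Rightarrow> nat \<Rightarrow> (nat \<times> nat \<Rightarrow> bool) \<Rightarrow> nat \<times> nat \<Rightarrow> bool" where
  "fill_tribe w i x v = (x v \<or> (fst v = i \<and> snd v < w))"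

lemma fill_tribe_in_inputs: "x \<in> inputs w \<Longrightarrow> i < 2^w \<Longrightarrow> fill_tribe w i x \<in> inputs w"
  by (auto simp: inputs_def fill_tribe_def tvars_def)

lemma tribes_fill_tribe: "i < 2^w \<Longrightarrow> tribes w (fill_tribe w i x)"
  by (auto simp: tribes_def fill_tribe_def)

lemma fill_tribe_inj:
  assumes "\<not> tribes w x" "\<not> tribes w x'" "i < 2^w" "i' < 2^w"
    and fill: "fill_tribe w i x = fill_tribe w i' x'"
    and row: "tribe_rows w x i = tribe_rows w x' i'"
  shows "i = i' \<and> x = x'"
proof -
  have "i = i'"
  proof (rule ccontr)
    assume "i \<noteq> i'"
    have "\<forall>j<w. fill_tribe w i x (i', j)" using fill tribes_fill_tribe[OF assms(4), of x']
      by (simp add: fill_tribe_def)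
    then show False using assms(1,4) \<open>i \<noteq> i'\<close> by (auto simp: tribes_def fill_tribe_def)
  qed
  moreover have "x v = x' v" for v
    using fun_cong[OF fill, of v] row \<open>i = i'\<close> assms(3)
    by (cases v) (auto simp: fill_tribe_def tribe_rows_def)
  ultimately show ?thesis by auto
qed

lemma not_correct_fill_unrevealed_tribe:
  assumes "\<not> tribes w x" "correct w s x c" "i < 2^w" "i \<notin> revealed_tribes w s x c"
  shows "\<not> correct w s (fill_tribe w i x) c"
proof
  assume correct_fill: "correct w s (fill_tribe w i x) c"
  have "x v = fill_tribe w i x v" if "revealed w s x c v" for v
    using that assms(3,4) by (cases v) (auto simp: fill_tribe_def revealed_tribes_def)
  then have same_run: "run w s x c n = run w s (fill_tribe w i x) c n" for n
    by (rule run_cong_revealed)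
  obtain n where "snd (snd (run w s x c n)) = Some False"
    using assms(1,2) by (auto simp: correct_def)
  moreover obtain m where "snd (snd (run w s x c m)) = Some True"
    using correct_fill tribes_fill_tribe[OF assms(3)] same_run by (auto simp: correct_def)
  ultimately show False using run_output_unique by blast
qed

definition errors :: "nat \<Rightarrow> strategy \<Rightarrow> ((nat \<times> nat \<Rightarrow> bool) \<times> (nat \<times> nat \<Rightarrow> nat)) set" where
  "errors w s = {(x, c). x \<in> inputs w \<and> c \<in> costs w \<and> \<not> correct w s x c}"

lemma errors_subset: "errors w s \<subseteq> inputs w \<times> costs w"
  by (auto simp: errors_def)

lemma finite_errors: "finite (errors w s)"
  using finite_subset[OF errors_subset] finite_inputs finite_costs by blast

lemma card_unrevealed_le:
  "card (SIGMA (x, c):{(x, c) \<in> {x \<in> inputs w. \<not> tribes w x} \<times> costs w. correct w s x c}.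
           {..<2^w} - revealed_tribes w s x c)
   \<le> card {(y, c) \<in> errors w s. tribes w y} * 2^w"
  (is "card ?S \<le> card ?E * 2^w")
proof -
  let ?f = "\<lambda>((x, c), i). ((fill_tribe w i x, c), tribe_rows w x i)"
  have "card ?S \<le> card (?E \<times> Pow {..<w})"
  proof (rule card_inj_on_le)
    show "inj_on ?f ?S"
      by (rule inj_onI) (auto dest: fill_tribe_inj)
    show "?f ` ?S \<subseteq> ?E \<times> Pow {..<w}"
      by (auto simp: errors_def fill_tribe_in_inputs tribes_fill_tribe not_correct_fill_unrevealed_tribe
          tribe_rows_def)
    show "finite (?E \<times> Pow {..<w})"
      by (intro finite_cartesian_product finite_subset[OF _ finite_errors]) auto
  qed
  also have "\<dots> = card ?E * 2^w"
    by (simp add: card_cartesian_product card_Pow)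
  finally show ?thesis .
qed

lemma card_unrevealed_plus_tribes_revealed:
  "card ({..<2^w} - revealed_tribes w s x c) + tribes_revealed w s x c = 2^w"
proof -
  have sub: "revealed_tribes w s x c \<subseteq> {..<2^w}" by (auto simp: revealed_tribes_def)
  then have "card (revealed_tribes w s x c) \<le> 2^w" using card_mono[OF finite_lessThan sub] by simp
  then show ?thesis
    using card_Diff_subset[OF finite_subset[OF sub finite_lessThan] sub]
    by (simp add: tribes_revealed_def revealed_tribes_def[symmetric])
qed

lemma card_zeros_costs_le:
  "2^w * card ({x \<in> inputs w. \<not> tribes w x} \<times> costs w)
   \<le> 2^w * card (errors w s) + (\<Sum>(x, c)\<in>inputs w \<times> costs w. tribes_revealed w s x c)"
proof -
  define Z where "Z = {x \<in> inputs w. \<not> tribes w x} \<times> costs w"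
  define Z_ok where "Z_ok = {(x, c) \<in> Z. correct w s x c}"
  define Z_err where "Z_err = {(x, c) \<in> errors w s. \<not> tribes w x}"
  define O_err where "O_err = {(x, c) \<in> errors w s. tribes w x}"
  have "Z_err \<subseteq> errors w s" "O_err \<subseteq> errors w s" "Z_ok \<subseteq> inputs w \<times> costs w"
    by (auto simp: Z_err_def O_err_def Z_ok_def Z_def)
  then have fin: "finite Z_err" "finite O_err" "finite Z_ok"
    using finite_errors finite_inputs finite_costs by (metis finite_subset finite_SigmaI)+
  have card_Z: "card Z = card Z_err + card Z_ok"
  proof -
    have "Z = Z_err \<union> Z_ok" "Z_err \<inter> Z_ok = {}" by (auto simp: Z_def Z_ok_def Z_err_def errors_def)
    then show ?thesis using fin card_Un_disjoint by metis
  qed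
  have card_errors: "card (errors w s) = card Z_err + card O_err"
  proof -
    have "errors w s = Z_err \<union> O_err" "Z_err \<inter> O_err = {}" by (auto simp: Z_err_def O_err_def)
    then show ?thesis using fin card_Un_disjoint by metis
  qed
  have "2^w * card Z_ok = (\<Sum>(x, c)\<in>Z_ok. card ({..<2^w} - revealed_tribes w s x c))
                      + (\<Sum>(x, c)\<in>Z_ok. tribes_revealed w s x c)"
    by (simp add: sum.distrib[symmetric] case_prod_beta card_unrevealed_plus_tribes_revealed)
  also have "(\<Sum>(x, c)\<in>Z_ok. card ({..<2^w} - revealed_tribes w s x c)) \<le> card O_err * 2^w"
    using card_unrevealed_le[of w s] fin(3) by (simp add: Z_ok_def Z_def O_err_def case_prod_beta)
  also have "(\<Sum>(x, c)\<in>Z_ok. tribes_revealed w s x c)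
             \<le> (\<Sum>(x, c)\<in>inputs w \<times> costs w. tribes_revealed w s x c)"
    by (rule sum_mono2) (auto simp: Z_ok_def Z_def finite_inputs finite_costs)
  finally show ?thesis
    unfolding Z_def[symmetric] card_Z card_errors by (simp add: algebra_simps)
qed

lemma card_inputs_costs_pos: "card (inputs w \<times> costs w) > 0"
proof -
  have "(\<lambda>_. False) \<in> inputs w" by (simp add: inputs_def)
  then show ?thesis
    using finite_inputs finite_costs costs_nonempty by (auto simp: card_gt_0_iff)
qed

lemma det_error_eq: "det_error w s = card (errors w s) / card (inputs w \<times> costs w)"
  by (simp add: det_error_def errors_def)

lemma det_revealed_eq:
  "det_revealed w s = (\<Sum>(x, c)\<in>inputs w \<times> costs w. tribes_revealed w s x c) / card (inputs w \<times> costs w)"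
  by (simp add: det_revealed_def of_nat_sum case_prod_beta)

lemma det_error_plus_det_revealed_ge:
  assumes "w \<ge> 1"
  shows "1/4 \<le> det_error w s + det_revealed w s / 2^w"
proof -
  define K where "K = card (inputs w \<times> costs w)"
  define N where "N = (\<Sum>(x, c)\<in>inputs w \<times> costs w. tribes_revealed w s x c)"
  have "2^w * K = 2^w * card (inputs w) * card (costs w)"
    by (simp add: K_def card_cartesian_product)
  also have "\<dots> \<le> 2^w * (4 * card {x \<in> inputs w. \<not> tribes w x}) * card (costs w)"
    using card_inputs_le_four_card_zeros[OF assms] by simp
  also have "\<dots> = 4 * (2^w * card ({x \<in> inputs w. \<not> tribes w x} \<times> costs w))"
    by (simp add: card_cartesian_product)
  also have "\<dots> \<le> 4 * (2^w * card (errors w s) + N)"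
    using card_zeros_costs_le[of w s] by (simp add: N_def)
  finally have "2^w * real K \<le> 4 * (2^w * real (card (errors w s)) + real N)"
    using of_nat_mono by fastforce
  moreover have "real K > 0" using card_inputs_costs_pos by (simp add: K_def)
  ultimately show ?thesis
    by (simp add: det_error_eq det_revealed_eq K_def[symmetric] N_def[symmetric] field_simps)
qed

lemma det_error_bounds: "0 \<le> det_error w s \<and> det_error w s \<le> 1"
proof -
  have "card (errors w s) \<le> card (inputs w \<times> costs w)"
    using card_mono[OF _ errors_subset] finite_inputs finite_costs by blast
  then show ?thesis
    using card_inputs_costs_pos[of w] by (simp add: det_error_eq del: card_cartesian_product)
qed

lemma tribes_revealed_le: "tribes_revealed w s x c \<le> 2^w"
  using card_unrevealed_plus_tribes_revealed[of w s x c] by linarith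

lemma det_revealed_bounds: "0 \<le> det_revealed w s \<and> det_revealed w s \<le> 2^w"
proof -
  have "(\<Sum>(x, c)\<in>inputs w \<times> costs w. tribes_revealed w s x c) \<le> card (inputs w \<times> costs w) * 2^w"
    using sum_bounded_above[of "inputs w \<times> costs w" "\<lambda>(x, c). tribes_revealed w s x c" "2^w"]
    by (simp add: case_prod_beta tribes_revealed_le)
  then have "real (\<Sum>(x, c)\<in>inputs w \<times> costs w. tribes_revealed w s x c)
             \<le> real (card (inputs w \<times> costs w)) * 2^w"
    using of_nat_mono by fastforce
  then show ?thesis
    using card_inputs_costs_pos[of w]
    by (simp add: det_revealed_eq divide_le_eq sum_nonneg mult.commute del: card_cartesian_product)
qed

theorem mainTheorem13:
  fixes \<epsilon>0 :: real
  assumes "0 \<le> \<epsilon>0" and "\<epsilon>0 < 1/4"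
  shows "\<exists>C>0. \<forall>w::nat. \<forall>R. w \<ge> 1 \<longrightarrow> randomized_alg w R \<longrightarrow>
           (\<integral>s. det_error w s \<partial>R) \<le> \<epsilon>0 \<longrightarrow>
           (\<integral>s. det_revealed w s \<partial>R) \<ge> C * 2 ^ w"
proof (intro exI[of _ "1/4 - \<epsilon>0"] conjI allI impI)
  show "0 < 1/4 - \<epsilon>0" using assms by simp
  fix w :: nat and R :: "strategy measure"
  assume w: "w \<ge> 1" and alg: "randomized_alg w R" and err: "(\<integral>s. det_error w s \<partial>R) \<le> \<epsilon>0"
  interpret prob_space R using alg by (simp add: randomized_alg_def)
  have int_err: "integrable R (det_error w)"
    using alg det_error_bounds by (intro integrable_const_bound[where B = 1]) (auto simp: randomized_alg_def)
  have int_rev: "integrable R (det_revealed w)"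
    using alg det_revealed_bounds by (intro integrable_const_bound[where B = "2^w"]) (auto simp: randomized_alg_def)
  have "1/4 \<le> (\<integral>s. det_error w s + det_revealed w s / 2^w \<partial>R)"
    using int_err int_rev det_error_plus_det_revealed_ge[OF w] by (intro integral_ge_const) auto
  also have "\<dots> = (\<integral>s. det_error w s \<partial>R) + (\<integral>s. det_revealed w s \<partial>R) / 2^w"
    using int_err int_rev by simp
  finally have "(1/4 - (\<integral>s. det_error w s \<partial>R)) * 2^w \<le> (\<integral>s. det_revealed w s \<partial>R)"
    by (simp add: field_simps)
  moreover have "(1/4 - \<epsilon>0) * 2^w \<le> (1/4 - (\<integral>s. det_error w s \<partial>R)) * 2^w"
    using err by (intro mult_right_mono) auto
  ultimately show "(1/4 - \<epsilon>0) * 2^w \<le> (\<integral>s. det_revealed w s \<partial>R)"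
    by linarith
qed

end
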